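(* Let $n \ge 1$ and let $a_1, \dots, a_n$ be positive real numbers with $\sum_{i=1}^n a_i = 1$. Consider vectors $u_{(i,t)}$ indexed by $(i,t) \in [n] \times [3]$ subject to the following constraints: (1) $u_{(i,t)} \cdot u_{(i,t)} = 1$ for all $(i,t)$; (2) $u_{(i,1)} \cdot u_{(i,2)} = 0$ for all $i \in [n]$; (3) $u_{(i,3)} \cdot u_{(i,1)} = u_{(i,3)} \cdot u_{(i,2)} = \frac{1}{\sqrt{2}}$ for all $i \in [n]$; (4) $u_{(i,1)} \cdot u_{(i+1,1)} = u_{(i,2)} \cdot u_{(i+1,2)} = u_{(i,3)} \cdot u_{(i+1,3)} = \cos a_i$ for all $i \in [n]$, where the index $i+1$ is taken modulo $n$ (so $n+1$ means $1$). Then there exists a set $I \subseteq [n]$ with $\sum_{i \in I} a_i = \sum_{i \notin I} a_i$ if and only if there exists a family of vectors in $\mathbb{R}^2$ satisfying these constraints. *)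

theory Defs
  imports "HOL-Analysis.Analysis"
begin

text \<open>Indices are 0-based: i ranges over {0..<n} (paper's [n]), t over {1,2,3}
  (paper's [3]); the successor of i is (i+1) mod n.\<close>

definition cyc_constraints ::
  "nat \<Rightarrow> (nat \<Rightarrow> real) \<Rightarrow> (nat \<Rightarrow> nat \<Rightarrow> 'v::real_inner) \<Rightarrow> bool" where
  "cyc_constraints n a u \<longleftrightarrow>
     (\<forall>i<n. \<forall>t\<in>{1,2,3::nat}. u i t \<bullet> u i t = 1) \<and>
     (\<forall>i<n. u i 1 \<bullet> u i 2 = 0) \<and>
     (\<forall>i<n. u i 3 \<bullet> u i 1 = 1 / sqrt 2 \<and> u i 3 \<bullet> u i 2 = 1 / sqrt 2) \<and>
     (\<forall>i<n. u i 1 \<bullet> u ((i + 1) mod n) 1 = cos (a i) \<and>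
            u i 2 \<bullet> u ((i + 1) mod n) 2 = cos (a i) \<and>
            u i 3 \<bullet> u ((i + 1) mod n) 3 = cos (a i))"

end

theory Submission
  imports Defs
begin

text \<open>Write the unit vector \<open>u(i,1)\<close> as \<open>(cos \<theta>(i), sin \<theta>(i))\<close>. The constraint
  \<open>cos (\<theta>(i) - \<theta>(i+1)) = cos a(i)\<close> means \<open>\<theta>(i) - \<theta>(i+1) = \<plusminus>a(i) + 2\<pi>k(i)\<close>. These
  differences telescope to \<open>0\<close> around the cycle, so the signed sum \<open>\<Sum> \<plusminus>a(i)\<close> is a
  multiple of \<open>2\<pi>\<close>; since \<open>\<Sum> a(i) = 1 < 2\<pi>\<close> it vanishes, and the signs give the
  balanced partition. Conversely, the partial sums of a vanishing signed sum are angles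
  \<open>\<theta>(i)\<close> that close up around the cycle; \<open>u(i,2)\<close> and \<open>u(i,3)\<close> are \<open>u(i,1)\<close>
  rotated by \<open>\<pi>/2\<close> and \<open>\<pi>/4\<close>.\<close>

lemma sum_signed_split:
  fixes a :: "'b \<Rightarrow> 'a::ring_1"
  assumes "finite A" "I \<subseteq> A" "\<And>i. i \<in> I \<Longrightarrow> e i = 1" "\<And>i. i \<in> A - I \<Longrightarrow> e i = -1"
  shows "(\<Sum>i\<in>A. e i * a i) = (\<Sum>i\<in>I. a i) - (\<Sum>i\<in>A - I. a i)"
proof -
  have "(\<Sum>i\<in>A. e i * a i) = (\<Sum>i\<in>I. e i * a i) + (\<Sum>i\<in>A - I. e i * a i)"
    using sum.subset_diff[OF assms(2,1)] by (simp add: add.commute)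
  also have "\<dots> = (\<Sum>i\<in>I. a i) + (\<Sum>i\<in>A - I. - a i)"
    using assms(3,4) by (intro arg_cong2[where f = "(+)"] sum.cong) auto
  finally show ?thesis by (simp add: sum_negf)
qed

lemma balanced_partition_iff_signed_sum:
  fixes a :: "nat \<Rightarrow> 'a::ring_1"
  shows "(\<exists>I \<subseteq> {..<n}. (\<Sum>i\<in>I. a i) = (\<Sum>i\<in>{..<n} - I. a i)) \<longleftrightarrow>
         (\<exists>e. (\<forall>i<n. e i = 1 \<or> e i = -1) \<and> (\<Sum>i<n. e i * a i) = 0)"
proof
  assume "\<exists>I \<subseteq> {..<n}. (\<Sum>i\<in>I. a i) = (\<Sum>i\<in>{..<n} - I. a i)"
  then obtain I where I: "I \<subseteq> {..<n}" "(\<Sum>i\<in>I. a i) = (\<Sum>i\<in>{..<n} - I. a i)" by blast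
  define e :: "nat \<Rightarrow> 'a" where "e i = (if i \<in> I then 1 else -1)" for i
  have "(\<Sum>i<n. e i * a i) = 0"
    using sum_signed_split[of "{..<n}" I e a] I by (simp add: e_def)
  moreover have "\<forall>i<n. e i = 1 \<or> e i = -1" by (simp add: e_def)
  ultimately show "\<exists>e. (\<forall>i<n. e i = 1 \<or> e i = -1) \<and> (\<Sum>i<n. e i * a i) = 0"
    by blast
next
  assume "\<exists>e. (\<forall>i<n. e i = 1 \<or> e i = -1) \<and> (\<Sum>i<n. e i * a i) = 0"
  then obtain e where e: "\<forall>i<n. e i = 1 \<or> e i = -1" "(\<Sum>i<n. e i * a i) = 0" by blast
  define I where "I = {i. i < n \<and> e i = 1}"
  have "I \<subseteq> {..<n}" by (auto simp: I_def)
  moreover have "(\<Sum>i\<in>I. a i) - (\<Sum>i\<in>{..<n} - I. a i) = (\<Sum>i<n. e i * a i)"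
    by (rule sum_signed_split[symmetric]) (use e(1) in \<open>auto simp: I_def\<close>)
  ultimately show "\<exists>I \<subseteq> {..<n}. (\<Sum>i\<in>I. a i) = (\<Sum>i\<in>{..<n} - I. a i)"
    using e(2) by auto
qed

lemma sum_cyclic_shift:
  fixes f :: "nat \<Rightarrow> 'a::comm_monoid_add"
  assumes "n \<ge> 1"
  shows "(\<Sum>i<n. f ((i + 1) mod n)) = (\<Sum>i<n. f i)"
proof -
  obtain m where n: "n = Suc m" using assms by (cases n) auto
  have "(\<Sum>i<Suc m. f ((i + 1) mod Suc m)) = (\<Sum>i<m. f ((i + 1) mod Suc m)) + f 0"
    by simp
  also have "(\<Sum>i<m. f ((i + 1) mod Suc m)) = (\<Sum>i<m. f (Suc i))"
    by (rule sum.cong) auto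
  also have "(\<Sum>i<m. f (Suc i)) + f 0 = (\<Sum>i<Suc m. f i)"
    by (subst sum.lessThan_Suc_shift) (simp add: add.commute)
  finally show ?thesis using n by simp
qed

lemma cyclic_angles_of_zero_sum:
  fixes d :: "nat \<Rightarrow> 'a::ab_group_add"
  assumes "(\<Sum>i<n. d i) = 0"
  shows "\<exists>\<theta>. \<forall>i<n. \<theta> ((i + 1) mod n) - \<theta> i = d i"
proof -
  define \<theta> where "\<theta> i = (\<Sum>j<i. d j)" for i
  have "\<theta> ((i + 1) mod n) - \<theta> i = d i" if "i < n" for i
  proof (cases "i + 1 < n")
    case False
    with that have "i + 1 = n" by simp
    then show ?thesis using assms by (auto simp: \<theta>_def neg_eq_iff_add_eq_0 add.commute)
  qed (simp add: \<theta>_def)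
  then show ?thesis by blast
qed

lemma signed_sum_of_cyclic_angles:
  fixes \<theta> a :: "nat \<Rightarrow> real"
  assumes "n \<ge> 1" and small: "(\<Sum>i<n. \<bar>a i\<bar>) < 2 * pi"
    and cos_diff: "\<And>i. i < n \<Longrightarrow> cos (\<theta> i - \<theta> ((i + 1) mod n)) = cos (a i)"
  shows "\<exists>e. (\<forall>i<n. e i = 1 \<or> e i = -1) \<and> (\<Sum>i<n. e i * a i) = 0"
proof -
  have "\<forall>i<n. \<exists>e k. (e = 1 \<or> e = -1) \<and> k \<in> \<int> \<and> \<theta> i - \<theta> ((i + 1) mod n) = e * a i + 2 * k * pi"
    using cos_diff by (metis cos_eq mult_1 mult_minus1)
  then obtain e k where e: "\<forall>i<n. e i = 1 \<or> e i = -1" and k: "\<forall>i<n. k i \<in> \<int>"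
    and diff: "\<forall>i<n. \<theta> i - \<theta> ((i + 1) mod n) = e i * a i + 2 * k i * pi"
    by metis
  have "0 = (\<Sum>i<n. \<theta> i - \<theta> ((i + 1) mod n))"
    using sum_cyclic_shift[OF \<open>n \<ge> 1\<close>, of \<theta>] by (simp add: sum_subtractf)
  also have "\<dots> = (\<Sum>i<n. e i * a i + 2 * k i * pi)"
    using diff by (intro sum.cong) auto
  also have "\<dots> = (\<Sum>i<n. e i * a i) + 2 * pi * (\<Sum>i<n. k i)"
    by (simp add: sum.distrib sum_distrib_left mult_ac)
  finally have winding: "(\<Sum>i<n. e i * a i) + 2 * pi * (\<Sum>i<n. k i) = 0" ..
  have "\<bar>\<Sum>i<n. e i * a i\<bar> \<le> (\<Sum>i<n. \<bar>e i * a i\<bar>)" by (rule sum_abs)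
  also have "\<dots> = (\<Sum>i<n. \<bar>a i\<bar>)"
  proof (rule sum.cong)
    fix i assume "i \<in> {..<n}"
    then show "\<bar>e i * a i\<bar> = \<bar>a i\<bar>" using e by (auto simp: abs_mult)
  qed simp
  finally have "\<bar>2 * pi * (\<Sum>i<n. k i)\<bar> < 2 * pi"
    using winding small by linarith
  then have "\<bar>\<Sum>i<n. k i\<bar> < 1" by (simp add: abs_mult)
  moreover have "(\<Sum>i<n. k i) \<in> \<int>" using k by auto
  ultimately have "(\<Sum>i<n. k i) = 0" by (rule Ints_nonzero_abs_less1[rotated])
  then show ?thesis using winding e by auto
qed

lemma cyclic_angles_iff_signed_sum:
  fixes a :: "nat \<Rightarrow> real"
  assumes "n \<ge> 1" "(\<Sum>i<n. \<bar>a i\<bar>) < 2 * pi"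
  shows "(\<exists>\<theta>. \<forall>i<n. cos (\<theta> i - \<theta> ((i + 1) mod n)) = cos (a i)) \<longleftrightarrow>
         (\<exists>e. (\<forall>i<n. e i = 1 \<or> e i = -1) \<and> (\<Sum>i<n. e i * a i) = 0)"
proof
  assume "\<exists>e. (\<forall>i<n. e i = 1 \<or> e i = -1) \<and> (\<Sum>i<n. e i * a i) = 0"
  then obtain e where e: "\<forall>i<n. e i = 1 \<or> e i = -1" "(\<Sum>i<n. e i * a i) = 0" by blast
  obtain \<theta> :: "nat \<Rightarrow> real" where "\<forall>i<n. \<theta> ((i + 1) mod n) - \<theta> i = e i * a i"
    using cyclic_angles_of_zero_sum[OF e(2)] by blast
  then have "\<forall>i<n. cos (\<theta> i - \<theta> ((i + 1) mod n)) = cos (a i)"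
    using e(1) by (metis cos_minus minus_diff_eq mult_1 mult_minus1)
  then show "\<exists>\<theta>. \<forall>i<n. cos (\<theta> i - \<theta> ((i + 1) mod n)) = cos (a i)" by blast
qed (use signed_sum_of_cyclic_angles[OF assms] in blast)

definition dir :: "real \<Rightarrow> real^2" where
  "dir x = vector [cos x, sin x]"

lemma inner_real2: "(x::real^2) \<bullet> y = x$1 * y$1 + x$2 * y$2"
  by (simp add: inner_vec_def sum_2)

lemma inner_dir [simp]: "dir x \<bullet> dir y = cos (x - y)"
  by (simp add: dir_def inner_real2 cos_diff)

lemma unit_real2_eq_dir:
  fixes x :: "real^2"
  assumes "x \<bullet> x = 1"
  obtains t where "x = dir t"
proof -
  have "(x$1)\<^sup>2 + (x$2)\<^sup>2 = 1" using assms by (simp add: inner_real2 power2_eq_square)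
  then obtain t where "x$1 = cos t" "x$2 = sin t" by (rule sincos_total_2pi)
  then have "x = dir t" by (simp add: dir_def vec_eq_iff forall_2)
  then show thesis by (rule that)
qed

definition frame_offset :: "nat \<Rightarrow> real" where
  "frame_offset t = (if t = 1 then 0 else if t = 2 then pi / 2 else pi / 4)"

lemma cyc_constraints_rotated_frames:
  fixes \<theta> a :: "nat \<Rightarrow> real"
  assumes "\<And>i. i < n \<Longrightarrow> cos (\<theta> i - \<theta> ((i + 1) mod n)) = cos (a i)"
  shows "cyc_constraints n a (\<lambda>i t. dir (\<theta> i + frame_offset t))"
proof -
  have "cos (pi / 4) = 1 / sqrt 2" by (simp add: cos_45 field_simps)
  moreover have "cos (pi / 4 - pi / 2) = cos (pi / 4)"
    using cos_minus[of "pi / 4"] by simp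
  ultimately show ?thesis
    using assms by (auto simp: cyc_constraints_def frame_offset_def)
qed

lemma cyclic_angles_of_cyc_constraints:
  fixes u :: "nat \<Rightarrow> nat \<Rightarrow> real^2"
  assumes "n \<ge> 1" "cyc_constraints n a u"
  shows "\<exists>\<theta>. \<forall>i<n. cos (\<theta> i - \<theta> ((i + 1) mod n)) = cos (a i)"
proof -
  have "\<forall>i<n. \<exists>t. u i 1 = dir t"
    using assms(2) unfolding cyc_constraints_def by (metis insertI1 unit_real2_eq_dir)
  then obtain \<theta> where \<theta>: "\<forall>i<n. u i 1 = dir (\<theta> i)" by metis
  have "\<forall>i<n. u i 1 \<bullet> u ((i + 1) mod n) 1 = cos (a i)"
    using assms(2) unfolding cyc_constraints_def by blast
  moreover have "\<forall>i<n. (i + 1) mod n < n" using assms(1) by simp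
  ultimately show ?thesis using \<theta> by auto
qed

theorem lemma3p2:
  fixes n :: nat and a :: "nat \<Rightarrow> real"
  assumes "n \<ge> 1"
    and "\<And>i. i < n \<Longrightarrow> a i > 0"
    and "(\<Sum>i<n. a i) = 1"
  shows "(\<exists>I \<subseteq> {..<n}. (\<Sum>i\<in>I. a i) = (\<Sum>i\<in>{..<n} - I. a i)) \<longleftrightarrow>
         (\<exists>u :: nat \<Rightarrow> nat \<Rightarrow> real ^ 2. cyc_constraints n a u)"
proof -
  have "(\<Sum>i<n. \<bar>a i\<bar>) = (\<Sum>i<n. a i)"
    by (rule sum.cong) (auto simp: assms(2) abs_of_pos)
  then have small: "(\<Sum>i<n. \<bar>a i\<bar>) < 2 * pi" using assms(3) pi_gt3 by linarith
  have "(\<exists>I \<subseteq> {..<n}. (\<Sum>i\<in>I. a i) = (\<Sum>i\<in>{..<n} - I. a i)) \<longleftrightarrow>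
        (\<exists>e. (\<forall>i<n. e i = 1 \<or> e i = -1) \<and> (\<Sum>i<n. e i * a i) = 0)"
    by (rule balanced_partition_iff_signed_sum)
  also have "\<dots> \<longleftrightarrow> (\<exists>\<theta>. \<forall>i<n. cos (\<theta> i - \<theta> ((i + 1) mod n)) = cos (a i))"
    by (rule cyclic_angles_iff_signed_sum[OF assms(1) small, symmetric])
  also have "\<dots> \<longleftrightarrow> (\<exists>u :: nat \<Rightarrow> nat \<Rightarrow> real ^ 2. cyc_constraints n a u)"
    using cyclic_angles_of_cyc_constraints[OF assms(1)] cyc_constraints_rotated_frames by blast
  finally show ?thesis .
qed

end
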